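(* $S\mathbb{H}$ is diffeomorphic to $S^3\times S^3\times\mathbb{R}$. In particular, $S\mathbb{H}$ is orientable.
   Context: For $q=a+bi+cj+dk\in\mathbb{H}$, $\bar q=a-bi-cj-dk$. $\mathcal{V}=\mathrm{span}_\mathbb{R}\{1,i,j\}$. $S\mathbb{H}=\{(\xi,\eta)\in\mathbb{H}^2\setminus\{(0,0)\}:\xi\bar\eta\in\mathcal{V}\}$, a subset of $\mathbb{H}^2\cong\mathbb{R}^8$. *)

theory Defs
  imports "HOL-Analysis.Analysis"
begin

text \<open>Quaternions a + bi + cj + dk are modelled as vectors in real^4 with
  components (q$1, q$2, q$3, q$4) = (a, b, c, d).\<close>

definition qmult :: "real^4 \<Rightarrow> real^4 \<Rightarrow> real^4" where
  "qmult p q = vector [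
     p$1*q$1 - p$2*q$2 - p$3*q$3 - p$4*q$4,
     p$1*q$2 + p$2*q$1 + p$3*q$4 - p$4*q$3,
     p$1*q$3 - p$2*q$4 + p$3*q$1 + p$4*q$2,
     p$1*q$4 + p$2*q$3 - p$3*q$2 + p$4*q$1]"

definition qconj :: "real^4 \<Rightarrow> real^4" where
  "qconj q = vector [q$1, - q$2, - q$3, - q$4]"

definition qV :: "(real^4) set" where
  "qV = span {vector [1,0,0,0], vector [0,1,0,0], vector [0,0,1,0]}"

definition SH :: "((real^4) \<times> (real^4)) set" where
  "SH = {(\<xi>, \<eta>). (\<xi>, \<eta>) \<noteq> (0, 0) \<and> qmult \<xi> (qconj \<eta>) \<in> qV}"

fun Cn_on :: "nat \<Rightarrow> 'a::euclidean_space set \<Rightarrow> ('a \<Rightarrow> 'b::real_normed_vector) \<Rightarrow> bool" where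
  "Cn_on 0 U f = continuous_on U f"
| "Cn_on (Suc n) U f = (\<exists>f'. (\<forall>x\<in>U. (f has_derivative f' x) (at x)) \<and>
                              (\<forall>v. Cn_on n U (\<lambda>x. f' x v)))"

definition smooth_on_open :: "'a::euclidean_space set \<Rightarrow> ('a \<Rightarrow> 'b::real_normed_vector) \<Rightarrow> bool" where
  "smooth_on_open U f \<longleftrightarrow> open U \<and> (\<forall>n. Cn_on n U f)"

definition smooth_map_on :: "'a::euclidean_space set \<Rightarrow> ('a \<Rightarrow> 'b::euclidean_space) \<Rightarrow> bool" where
  "smooth_map_on S f \<longleftrightarrow> (\<forall>x\<in>S. \<exists>U F. x \<in> U \<and> smooth_on_open U F \<and> (\<forall>y\<in>S \<inter> U. F y = f y))"

definition diffeomorphic :: "'a::euclidean_space set \<Rightarrow> 'b::euclidean_space set \<Rightarrow> bool" where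
  "diffeomorphic S T \<longleftrightarrow> (\<exists>f g. f ` S \<subseteq> T \<and> g ` T \<subseteq> S \<and>
     (\<forall>x\<in>S. g (f x) = x) \<and> (\<forall>y\<in>T. f (g y) = y) \<and>
     smooth_map_on S f \<and> smooth_map_on T g)"

end

theory Submission
  imports Defs
begin

text \<open>The condition \<open>\<xi> \<eta>\<^sup>* \<in> V\<close> says that the k-component of \<open>\<xi> \<eta>\<^sup>*\<close>, a quadratic form
  of signature (4,4) on \<open>\<real>\<^sup>8\<close>, vanishes. A linear change of coordinates \<open>(\<xi>, \<eta>) \<mapsto> (u, v)\<close>
  turns this form into \<open>(|u|\<^sup>2 - |v|\<^sup>2)/4\<close>, so \<open>S\<bbbH>\<close> is linearly isomorphic to the null cone
  \<open>|u| = |v|\<close> with its vertex removed. Polar coordinates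
  \<open>(u, v) \<mapsto> ((u/|u|, v/|v|), ln |u|)\<close> identify that punctured cone with \<open>S\<^sup>3 \<times> S\<^sup>3 \<times> \<real>\<close>.\<close>

subsection \<open>Calculus of \<open>C\<^sup>n\<close> maps\<close>

lemma Cn_on_SucI:
  assumes "\<And>x. x \<in> U \<Longrightarrow> (f has_derivative f' x) (at x)" "\<And>v. Cn_on n U (\<lambda>x. f' x v)"
  shows "Cn_on (Suc n) U f"
  using assms by auto

lemma Cn_on_SucD: "Cn_on (Suc n) U f \<Longrightarrow> Cn_on n U f"
proof (induction n arbitrary: f)
  case 0
  then obtain f' where "\<forall>x\<in>U. (f has_derivative f' x) (at x)" by auto
  then show ?case
    by (auto intro!: continuous_at_imp_continuous_on has_derivative_continuous)
next
  case (Suc n)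
  then obtain f' where "\<forall>x\<in>U. (f has_derivative f' x) (at x)" "\<forall>v. Cn_on (Suc n) U (\<lambda>x. f' x v)"
    by auto
  then show ?case using Suc.IH by (auto intro: Cn_on_SucI)
qed

lemma Cn_on_const: "Cn_on n U (\<lambda>x. c)"
proof (induction n arbitrary: c)
  case (Suc n)
  show ?case by (rule Cn_on_SucI[where f' = "\<lambda>x v. 0"]) (auto intro: Suc)
qed simp

lemma Cn_on_subset: "Cn_on n U f \<Longrightarrow> W \<subseteq> U \<Longrightarrow> Cn_on n W f"
proof (induction n arbitrary: f)
  case 0
  then show ?case by (auto intro: continuous_on_subset)
next
  case (Suc n)
  then obtain f' where "\<forall>x\<in>U. (f has_derivative f' x) (at x)" "\<forall>v. Cn_on n U (\<lambda>x. f' x v)"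
    by auto
  then show ?case
    by (intro Cn_on_SucI[where f' = f']) (use Suc.IH Suc.prems(2) in auto)
qed

lemma Cn_on_cong:
  assumes "open U" "\<And>x. x \<in> U \<Longrightarrow> f x = g x" "Cn_on n U f"
  shows "Cn_on n U g"
proof (cases n)
  case 0
  then show ?thesis using assms continuous_on_cong by fastforce
next
  case (Suc m)
  then obtain f' where f': "\<forall>x\<in>U. (f has_derivative f' x) (at x)" "\<forall>v. Cn_on m U (\<lambda>x. f' x v)"
    using assms(3) by auto
  have "(g has_derivative f' x) (at x)" if "x \<in> U" for x
    using that f'(1) assms(1,2) by (metis has_derivative_transform_within_open)
  then show ?thesis using Suc f'(2) by (auto intro: Cn_on_SucI)
qed

lemma Cn_on_add: "Cn_on n U f \<Longrightarrow> Cn_on n U g \<Longrightarrow> Cn_on n U (\<lambda>x. f x + g x)"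
proof (induction n arbitrary: f g)
  case 0
  then show ?case by (auto intro: continuous_on_add)
next
  case (Suc n)
  obtain f' where f': "\<forall>x\<in>U. (f has_derivative f' x) (at x)" "\<forall>v. Cn_on n U (\<lambda>x. f' x v)"
    using Suc.prems by auto
  obtain g' where g': "\<forall>x\<in>U. (g has_derivative g' x) (at x)" "\<forall>v. Cn_on n U (\<lambda>x. g' x v)"
    using Suc.prems by auto
  show ?case
    by (intro Cn_on_SucI[where f' = "\<lambda>x v. f' x v + g' x v"])
      (use f' g' Suc.IH in \<open>auto intro: has_derivative_add\<close>)
qed

lemma Cn_on_sum:
  "finite I \<Longrightarrow> (\<And>i. i \<in> I \<Longrightarrow> Cn_on n U (f i)) \<Longrightarrow> Cn_on n U (\<lambda>x. \<Sum>i\<in>I. f i x)"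
  by (induction I rule: finite_induct) (auto intro: Cn_on_add Cn_on_const)

lemma Cn_on_bilinear:
  assumes "bounded_bilinear p"
  shows "Cn_on n U a \<Longrightarrow> Cn_on n U b \<Longrightarrow> Cn_on n U (\<lambda>x. p (a x) (b x))"
proof (induction n arbitrary: a b)
  case 0
  then show ?case using bounded_bilinear.continuous_on[OF assms] by auto
next
  case (Suc n)
  obtain a' where a': "\<forall>x\<in>U. (a has_derivative a' x) (at x)" "\<forall>v. Cn_on n U (\<lambda>x. a' x v)"
    using Suc.prems by auto
  obtain b' where b': "\<forall>x\<in>U. (b has_derivative b' x) (at x)" "\<forall>v. Cn_on n U (\<lambda>x. b' x v)"
    using Suc.prems by auto
  have "Cn_on n U a" "Cn_on n U b"
    using Suc.prems Cn_on_SucD by blast+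
  show ?case
  proof (rule Cn_on_SucI)
    show "((\<lambda>x. p (a x) (b x)) has_derivative (\<lambda>v. p (a x) (b' x v) + p (a' x v) (b x))) (at x)"
      if "x \<in> U" for x
      using that a'(1) b'(1) bounded_bilinear.FDERIV[OF assms] by blast
    show "Cn_on n U (\<lambda>x. p (a x) (b' x v) + p (a' x v) (b x))" for v
      using \<open>Cn_on n U a\<close> \<open>Cn_on n U b\<close> a'(2) b'(2) by (intro Cn_on_add Suc.IH) auto
  qed
qed

lemma Cn_on_linear: "bounded_linear f \<Longrightarrow> Cn_on n U f"
  by (cases n)
    (auto intro!: linear_continuous_on Cn_on_SucI[where f' = "\<lambda>x. f"] Cn_on_const
      bounded_linear_imp_has_derivative)

lemma Cn_on_Pair: "Cn_on n U f \<Longrightarrow> Cn_on n U g \<Longrightarrow> Cn_on n U (\<lambda>x. (f x, g x))"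
proof (induction n arbitrary: f g)
  case 0
  then show ?case by (auto intro: continuous_on_Pair)
next
  case (Suc n)
  obtain f' where f': "\<forall>x\<in>U. (f has_derivative f' x) (at x)" "\<forall>v. Cn_on n U (\<lambda>x. f' x v)"
    using Suc.prems by auto
  obtain g' where g': "\<forall>x\<in>U. (g has_derivative g' x) (at x)" "\<forall>v. Cn_on n U (\<lambda>x. g' x v)"
    using Suc.prems by auto
  show ?case
    by (intro Cn_on_SucI[where f' = "\<lambda>x v. (f' x v, g' x v)"])
      (use f' g' Suc.IH in \<open>auto intro: has_derivative_Pair\<close>)
qed

text \<open>The directional derivative \<open>x \<mapsto> g'(f x)(f' x v)\<close> of a composite is expanded in a
  basis, \<open>\<Sum>\<^sub>i (f' x v \<bullet> i) g'(f x) i\<close>, so that the induction hypothesis applies to each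
  \<open>x \<mapsto> g'(f x) i\<close>.\<close>
lemma Cn_on_compose:
  fixes f :: "'a::euclidean_space \<Rightarrow> 'b::euclidean_space" and g :: "'b \<Rightarrow> 'c::real_normed_vector"
  assumes "open U" "open V"
  shows "f ` U \<subseteq> V \<Longrightarrow> Cn_on n U f \<Longrightarrow> Cn_on n V g \<Longrightarrow> Cn_on n U (\<lambda>x. g (f x))"
proof (induction n arbitrary: f g)
  case 0
  then show ?case using continuous_on_compose2[of V g U f] by simp
next
  case (Suc n)
  obtain f' where f': "\<forall>x\<in>U. (f has_derivative f' x) (at x)" "\<forall>v. Cn_on n U (\<lambda>x. f' x v)"
    using Suc.prems by auto
  obtain g' where g': "\<forall>y\<in>V. (g has_derivative g' y) (at y)" "\<forall>v. Cn_on n V (\<lambda>y. g' y v)"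
    using Suc.prems by auto
  have "Cn_on n U f" using Suc.prems(2) by (rule Cn_on_SucD)
  then have "Cn_on n U (\<lambda>x. g' (f x) i)" for i
    using Suc.IH[OF Suc.prems(1)] g'(2) by blast
  show ?case
  proof (rule Cn_on_SucI)
    show "((\<lambda>x. g (f x)) has_derivative (\<lambda>v. g' (f x) (f' x v))) (at x)" if "x \<in> U" for x
    proof -
      have "f x \<in> V" using that Suc.prems(1) by blast
      then have "((g \<circ> f) has_derivative (g' (f x) \<circ> f' x)) (at x)"
        using that f'(1) g'(1) by (intro diff_chain_at) auto
      then show ?thesis by (simp add: o_def)
    qed
    show "Cn_on n U (\<lambda>x. g' (f x) (f' x v))" for v
    proof (rule Cn_on_cong[OF assms(1)])
      show "(\<Sum>i\<in>Basis. (f' x v \<bullet> i) *\<^sub>R g' (f x) i) = g' (f x) (f' x v)" if "x \<in> U" for x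
      proof -
        have "linear (g' (f x))"
          using that Suc.prems(1) g'(1) has_derivative_linear by blast
        then have "g' (f x) (\<Sum>i\<in>Basis. (f' x v \<bullet> i) *\<^sub>R i) =
                   (\<Sum>i\<in>Basis. (f' x v \<bullet> i) *\<^sub>R g' (f x) i)"
          by (simp add: linear_sum linear_scale)
        then show ?thesis
          by (simp add: euclidean_representation)
      qed
      show "Cn_on n U (\<lambda>x. \<Sum>i\<in>Basis. (f' x v \<bullet> i) *\<^sub>R g' (f x) i)"
        using f'(2) \<open>\<And>i. Cn_on n U (\<lambda>x. g' (f x) i)\<close>
        by (intro Cn_on_sum Cn_on_bilinear[OF bounded_bilinear_scaleR]
            Cn_on_bilinear[OF bounded_bilinear_inner] Cn_on_const) auto
    qed
  qed
qed

lemma Cn_on_inverse: "Cn_on n {0<..} (inverse :: real \<Rightarrow> real)"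
proof (induction n)
  case 0
  then show ?case by (auto intro!: continuous_on_inverse continuous_on_id)
next
  case (Suc n)
  show ?case
  proof (rule Cn_on_SucI)
    show "(inverse has_derivative (\<lambda>v. inverse x * inverse x * - v)) (at x)"
      if "x \<in> {0<..}" for x :: real
    proof -
      have "(inverse has_field_derivative - (inverse x ^ 2)) (at x)"
        using that DERIV_inverse[of x] by (auto simp: numeral_2_eq_2)
      then show ?thesis
        unfolding has_field_derivative_def
        by (rule has_derivative_eq_rhs) (simp add: fun_eq_iff power2_eq_square)
    qed
    show "Cn_on n {0<..} (\<lambda>x::real. inverse x * inverse x * - v)" for v
      by (intro Cn_on_bilinear[OF bounded_bilinear_mult] Cn_on_const Suc)
  qed
qed

lemma Cn_on_sqrt: "Cn_on n {0<..} sqrt"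
proof (induction n)
  case 0
  then show ?case by (auto intro!: continuous_intros)
next
  case (Suc n)
  show ?case
  proof (rule Cn_on_SucI)
    show "(sqrt has_derivative (\<lambda>v. inverse (sqrt x) * (v / 2))) (at x)" if "x \<in> {0<..}" for x
    proof -
      have "(sqrt has_field_derivative inverse (sqrt x) / 2) (at x)"
        using that DERIV_real_sqrt[of x] by auto
      then show ?thesis
        unfolding has_field_derivative_def by (rule has_derivative_eq_rhs) (simp add: fun_eq_iff)
    qed
    have "Cn_on n {0<..} (\<lambda>x. inverse (sqrt x))"
      by (rule Cn_on_compose[OF open_greaterThan open_greaterThan _ Suc Cn_on_inverse]) auto
    then show "Cn_on n {0<..} (\<lambda>x. inverse (sqrt x) * (v / 2))" for v
      by (intro Cn_on_bilinear[OF bounded_bilinear_mult] Cn_on_const)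
  qed
qed

lemma Cn_on_ln: "Cn_on n {0<..} (ln :: real \<Rightarrow> real)"
proof (cases n)
  case 0
  then show ?thesis by (auto intro!: continuous_on_ln continuous_on_id)
next
  case (Suc m)
  have "Cn_on (Suc m) {0<..} (ln :: real \<Rightarrow> real)"
  proof (rule Cn_on_SucI)
    show "(ln has_derivative (\<lambda>v. inverse x * v)) (at x)" if "x \<in> {0<..}" for x :: real
      using that DERIV_ln[of x, unfolded has_field_derivative_def] by auto
    show "Cn_on m {0<..} (\<lambda>x::real. inverse x * v)" for v
      by (intro Cn_on_bilinear[OF bounded_bilinear_mult] Cn_on_const Cn_on_inverse)
  qed
  then show ?thesis using Suc by simp
qed

lemma Cn_on_exp: "Cn_on n UNIV (exp :: real \<Rightarrow> real)"
proof (induction n)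
  case 0
  then show ?case by (auto intro!: continuous_on_exp continuous_on_id)
next
  case (Suc n)
  show ?case
  proof (rule Cn_on_SucI)
    show "(exp has_derivative (\<lambda>v. exp x * v)) (at x)" for x :: real
      using DERIV_exp[of x, unfolded has_field_derivative_def] by auto
    show "Cn_on n UNIV (\<lambda>x::real. exp x * v)" for v
      by (intro Cn_on_bilinear[OF bounded_bilinear_mult] Cn_on_const Suc)
  qed
qed

lemma Cn_on_norm: "Cn_on n (- {0}) (norm :: 'a::euclidean_space \<Rightarrow> real)"
proof -
  have "Cn_on n (- {0}) (\<lambda>x::'a. x \<bullet> x)"
    by (intro Cn_on_bilinear[OF bounded_bilinear_inner] Cn_on_linear bounded_linear_ident)
  then have "Cn_on n (- {0}) (\<lambda>x::'a. sqrt (x \<bullet> x))"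
    by (intro Cn_on_compose[OF open_Compl[OF closed_singleton] open_greaterThan _ _ Cn_on_sqrt]) auto
  then show ?thesis
    by (rule Cn_on_cong[OF open_Compl[OF closed_singleton], rotated]) (simp add: norm_eq_sqrt_inner)
qed

lemma Cn_on_sgn: "Cn_on n (- {0}) (sgn :: 'a::euclidean_space \<Rightarrow> 'a)"
proof -
  have "Cn_on n (- {0}) (\<lambda>x::'a. inverse (norm x))"
    by (intro Cn_on_compose[OF open_Compl[OF closed_singleton] open_greaterThan _ Cn_on_norm
          Cn_on_inverse]) auto
  then have "Cn_on n (- {0}) (\<lambda>x::'a. inverse (norm x) *\<^sub>R x)"
    by (rule Cn_on_bilinear[OF bounded_bilinear_scaleR _ Cn_on_linear[OF bounded_linear_ident]])
  then show ?thesis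
    by (rule Cn_on_cong[OF open_Compl[OF closed_singleton], rotated]) (simp add: sgn_div_norm)
qed

lemma Cn_on_ln_norm: "Cn_on n (- {0}) (\<lambda>x::'a::euclidean_space. ln (norm x))"
  by (intro Cn_on_compose[OF open_Compl[OF closed_singleton] open_greaterThan _ Cn_on_norm Cn_on_ln])
    auto

subsection \<open>Smooth maps and diffeomorphisms\<close>

lemma smooth_map_on_if_Cn_on_open:
  assumes "open U" "S \<subseteq> U" "\<And>n. Cn_on n U f"
  shows "smooth_map_on S f"
  using assms unfolding smooth_map_on_def smooth_on_open_def by blast

lemma smooth_map_on_linear:
  fixes f :: "'a::euclidean_space \<Rightarrow> 'b::euclidean_space"
  shows "linear f \<Longrightarrow> smooth_map_on S f"
  by (intro smooth_map_on_if_Cn_on_open[OF open_UNIV subset_UNIV] Cn_on_linear)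
    (simp add: linear_conv_bounded_linear)

lemma smooth_map_on_compose:
  fixes f :: "'a::euclidean_space \<Rightarrow> 'b::euclidean_space" and g :: "'b \<Rightarrow> 'c::euclidean_space"
  assumes f: "smooth_map_on S f" and g: "smooth_map_on T g" and "f ` S \<subseteq> T"
  shows "smooth_map_on S (g \<circ> f)"
  unfolding smooth_map_on_def
proof
  fix x assume "x \<in> S"
  then obtain U F where U: "x \<in> U" "open U" "\<And>n. Cn_on n U F" and F: "\<forall>y\<in>S \<inter> U. F y = f y"
    using f unfolding smooth_map_on_def smooth_on_open_def by blast
  have "f x \<in> T" using \<open>x \<in> S\<close> assms(3) by blast
  then obtain V G where V: "f x \<in> V" "open V" "\<And>n. Cn_on n V G" and G: "\<forall>z\<in>T \<inter> V. G z = g z"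
    using g unfolding smooth_map_on_def smooth_on_open_def by blast
  define W where "W = F -` V \<inter> U"
  have "open W"
    using continuous_on_open_vimage[OF U(2), of F] U(3)[of 0] V(2) unfolding W_def by simp
  moreover have "x \<in> W"
    using U(1) V(1) F \<open>x \<in> S\<close> by (simp add: W_def)
  moreover have "Cn_on n W (\<lambda>y. G (F y))" for n
  proof (rule Cn_on_compose[OF \<open>open W\<close> V(2)])
    show "F ` W \<subseteq> V" by (auto simp: W_def)
    show "Cn_on n W F" using U(3) by (rule Cn_on_subset) (auto simp: W_def)
    show "Cn_on n V G" by (rule V(3))
  qed
  moreover have "\<forall>y\<in>S \<inter> W. G (F y) = (g \<circ> f) y"
    using F G assms(3) by (auto simp: W_def)
  ultimately show "\<exists>W H. x \<in> W \<and> smooth_on_open W H \<and> (\<forall>y\<in>S \<inter> W. H y = (g \<circ> f) y)"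
    unfolding smooth_on_open_def by (intro exI[of _ W] exI[of _ "\<lambda>y. G (F y)"]) simp
qed

lemma diffeomorphic_trans:
  fixes S :: "'a::euclidean_space set" and T :: "'b::euclidean_space set"
    and R :: "'c::euclidean_space set"
  assumes "diffeomorphic S T" "diffeomorphic T R"
  shows "diffeomorphic S R"
proof -
  obtain f g where fg: "f ` S \<subseteq> T" "g ` T \<subseteq> S" "\<forall>x\<in>S. g (f x) = x" "\<forall>y\<in>T. f (g y) = y"
    "smooth_map_on S f" "smooth_map_on T g"
    using assms(1) unfolding diffeomorphic_def by blast
  obtain f' g' where fg': "f' ` T \<subseteq> R" "g' ` R \<subseteq> T" "\<forall>x\<in>T. g' (f' x) = x" "\<forall>y\<in>R. f' (g' y) = y"
    "smooth_map_on T f'" "smooth_map_on R g'"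
    using assms(2) unfolding diffeomorphic_def by blast
  show ?thesis
    unfolding diffeomorphic_def
    by (rule exI[of _ "f' \<circ> f"], rule exI[of _ "g \<circ> g'"])
      (use fg fg' in \<open>auto intro!: smooth_map_on_compose simp: image_subset_iff\<close>)
qed

lemma diffeomorphic_linear_image:
  fixes f :: "'a::euclidean_space \<Rightarrow> 'b::euclidean_space"
  assumes "linear f" "linear g" "\<And>x. x \<in> S \<Longrightarrow> g (f x) = x"
  shows "diffeomorphic S (f ` S)"
  unfolding diffeomorphic_def
  by (rule exI[of _ f], rule exI[of _ g]) (use assms in \<open>auto intro: smooth_map_on_linear\<close>)

subsection \<open>The punctured null cone\<close>

definition punctured_null_cone :: "('a::real_normed_vector \<times> 'a) set" where
  "punctured_null_cone = {(u, v). norm u = norm v \<and> u \<noteq> 0}"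

definition cone_polar :: "'a::real_normed_vector \<times> 'a \<Rightarrow> ('a \<times> 'a) \<times> real" where
  "cone_polar p = ((sgn (fst p), sgn (snd p)), ln (norm (fst p)))"

definition cone_polar_inv :: "('a::real_normed_vector \<times> 'a) \<times> real \<Rightarrow> 'a \<times> 'a" where
  "cone_polar_inv w = (exp (snd w) *\<^sub>R fst (fst w), exp (snd w) *\<^sub>R snd (fst w))"

lemma smooth_map_on_cone_polar:
  "smooth_map_on (punctured_null_cone :: ('a::euclidean_space \<times> 'a) set) cone_polar"
proof (rule smooth_map_on_if_Cn_on_open)
  let ?U = "(- {0}) \<times> (- {0}) :: ('a \<times> 'a) set"
  show "open ?U"
    by (intro open_Times open_Compl closed_singleton)
  show "punctured_null_cone \<subseteq> ?U"
    by (auto simp: punctured_null_cone_def)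
  have on_fst: "Cn_on n ?U (\<lambda>p. h (fst p))" and on_snd: "Cn_on n ?U (\<lambda>p. h (snd p))"
    if "Cn_on n (- {0}) h" for n and h :: "'a \<Rightarrow> 'b::real_normed_vector"
    by (rule Cn_on_compose[OF \<open>open ?U\<close> open_Compl[OF closed_singleton] _
          Cn_on_linear[OF bounded_linear_fst] that]
        Cn_on_compose[OF \<open>open ?U\<close> open_Compl[OF closed_singleton] _
          Cn_on_linear[OF bounded_linear_snd] that]; auto)+
  show "Cn_on n ?U cone_polar" for n
    unfolding cone_polar_def
    by (intro Cn_on_Pair on_fst on_snd Cn_on_sgn Cn_on_ln_norm)
qed

lemma smooth_map_on_cone_polar_inv:
  "smooth_map_on S (cone_polar_inv :: ('a::euclidean_space \<times> 'a) \<times> real \<Rightarrow> 'a \<times> 'a)"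
proof (rule smooth_map_on_if_Cn_on_open[OF open_UNIV subset_UNIV])
  fix n
  have "Cn_on n UNIV (\<lambda>w::('a \<times> 'a) \<times> real. exp (snd w))"
    by (rule Cn_on_compose[OF open_UNIV open_UNIV _ Cn_on_linear[OF bounded_linear_snd] Cn_on_exp])
      auto
  moreover have "Cn_on n UNIV (\<lambda>w::('a \<times> 'a) \<times> real. fst (fst w))"
    "Cn_on n UNIV (\<lambda>w::('a \<times> 'a) \<times> real. snd (fst w))"
    by (intro Cn_on_linear bounded_linear_compose[OF bounded_linear_fst bounded_linear_fst]
        bounded_linear_compose[OF bounded_linear_snd bounded_linear_fst])+
  ultimately show "Cn_on n UNIV (cone_polar_inv :: ('a \<times> 'a) \<times> real \<Rightarrow> 'a \<times> 'a)"
    unfolding cone_polar_inv_def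
    by (intro Cn_on_Pair Cn_on_bilinear[OF bounded_bilinear_scaleR])
qed

lemma cone_polar_image:
  "cone_polar ` punctured_null_cone \<subseteq> (sphere 0 1 \<times> sphere 0 1) \<times> UNIV"
  by (auto simp: punctured_null_cone_def cone_polar_def norm_sgn)

lemma cone_polar_inv_image:
  "cone_polar_inv ` ((sphere 0 1 \<times> sphere 0 1) \<times> UNIV) \<subseteq> punctured_null_cone"
  by (auto simp: punctured_null_cone_def cone_polar_inv_def)

lemma cone_polar_inv_cone_polar:
  assumes "p \<in> punctured_null_cone"
  shows "cone_polar_inv (cone_polar p) = p"
proof -
  have "exp (ln (norm (fst p))) = norm (fst p)" "norm (fst p) = norm (snd p)" "snd p \<noteq> 0"
    using assms by (auto simp: punctured_null_cone_def)
  then show ?thesis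
    by (simp add: cone_polar_def cone_polar_inv_def sgn_div_norm)
qed

lemma cone_polar_cone_polar_inv:
  "w \<in> (sphere 0 1 \<times> sphere 0 1) \<times> UNIV \<Longrightarrow> cone_polar (cone_polar_inv w) = w"
  by (auto simp: cone_polar_def cone_polar_inv_def sgn_scaleR sgn_div_norm)

lemma diffeomorphic_punctured_null_cone:
  "diffeomorphic (punctured_null_cone :: ('a::euclidean_space \<times> 'a) set)
     ((sphere (0::'a) 1 \<times> sphere (0::'a) 1) \<times> (UNIV :: real set))"
  unfolding diffeomorphic_def
  by (rule exI[of _ cone_polar], rule exI[of _ cone_polar_inv])
    (simp add: cone_polar_image cone_polar_inv_image cone_polar_inv_cone_polar
      cone_polar_cone_polar_inv smooth_map_on_cone_polar smooth_map_on_cone_polar_inv)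

subsection \<open>Coordinates diagonalising the defining form of \<open>S\<bbbH>\<close>\<close>

lemma vector_4 [simp]:
  "(vector [x, y, z, w] :: 'a::zero^4) $ 1 = x"
  "(vector [x, y, z, w] :: 'a^4) $ 2 = y"
  "(vector [x, y, z, w] :: 'a^4) $ 3 = z"
  "(vector [x, y, z, w] :: 'a^4) $ 4 = w"
  unfolding vector_def by simp_all

lemma mem_qV_iff: "x \<in> qV \<longleftrightarrow> x $ 4 = 0"
proof
  assume "x \<in> qV"
  then show "x $ 4 = 0"
    unfolding qV_def by (induction rule: span_induct_alt) auto
next
  assume "x $ 4 = 0"
  then have "x = x$1 *\<^sub>R vector [1,0,0,0] + x$2 *\<^sub>R vector [0,1,0,0] + x$3 *\<^sub>R vector [0,0,1,0]"
    by (simp add: vec_eq_iff forall_4)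
  also have "\<dots> \<in> qV"
    unfolding qV_def by (intro span_add span_scale span_base) auto
  finally show "x \<in> qV" .
qed

definition cone_coords :: "(real^4) \<times> (real^4) \<Rightarrow> (real^4) \<times> (real^4)" where
  "cone_coords = (\<lambda>(\<xi>, \<eta>).
     (vector [\<xi>$4 + \<eta>$1, \<xi>$1 - \<eta>$4, \<xi>$3 + \<eta>$2, \<xi>$2 - \<eta>$3],
      vector [\<xi>$4 - \<eta>$1, \<xi>$1 + \<eta>$4, \<xi>$3 - \<eta>$2, \<xi>$2 + \<eta>$3]))"

definition cone_coords_inv :: "(real^4) \<times> (real^4) \<Rightarrow> (real^4) \<times> (real^4)" where
  "cone_coords_inv = (\<lambda>(u, v).
     (vector [(u$2 + v$2) / 2, (u$4 + v$4) / 2, (u$3 + v$3) / 2, (u$1 + v$1) / 2],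
      vector [(u$1 - v$1) / 2, (u$3 - v$3) / 2, (v$4 - u$4) / 2, (v$2 - u$2) / 2]))"

lemma linear_cone_coords: "linear cone_coords"
  by (rule linearI) (auto simp: cone_coords_def vec_eq_iff forall_4 algebra_simps split: prod.splits)

lemma linear_cone_coords_inv: "linear cone_coords_inv"
  by (rule linearI) (auto simp: cone_coords_inv_def vec_eq_iff forall_4 field_simps split: prod.splits)

lemma cone_coords_inv_cone_coords: "cone_coords_inv (cone_coords p) = p"
  by (auto simp: cone_coords_def cone_coords_inv_def vec_eq_iff forall_4 split: prod.splits)

lemma cone_coords_cone_coords_inv: "cone_coords (cone_coords_inv p) = p"
  by (auto simp: cone_coords_def cone_coords_inv_def vec_eq_iff forall_4 field_simps split: prod.splits)

lemma norm_cone_coords: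
  assumes "cone_coords (\<xi>, \<eta>) = (u, v)"
  shows "(norm u)\<^sup>2 - (norm v)\<^sup>2 = 4 * qmult \<xi> (qconj \<eta>) $ 4"
  using assms unfolding power2_norm_eq_inner
  by (auto simp: cone_coords_def qmult_def qconj_def inner_vec_def sum_4 algebra_simps)

lemma SH_iff_cone_coords: "p \<in> SH \<longleftrightarrow> cone_coords p \<in> punctured_null_cone"
proof -
  obtain \<xi> \<eta> u v where p: "p = (\<xi>, \<eta>)" and uv: "cone_coords (\<xi>, \<eta>) = (u, v)"
    by (metis surj_pair)
  have zero: "(\<xi>, \<eta>) = 0 \<longleftrightarrow> (u, v) = 0"
    using uv cone_coords_inv_cone_coords[of "(\<xi>, \<eta>)"]
      linear_0[OF linear_cone_coords] linear_0[OF linear_cone_coords_inv] by metis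
  have "qmult \<xi> (qconj \<eta>) \<in> qV \<longleftrightarrow> (norm u)\<^sup>2 = (norm v)\<^sup>2"
    using norm_cone_coords[OF uv] by (auto simp: mem_qV_iff)
  then have "qmult \<xi> (qconj \<eta>) \<in> qV \<longleftrightarrow> norm u = norm v"
    by (simp add: power2_eq_iff_nonneg)
  with zero show ?thesis
    by (auto simp: p uv SH_def punctured_null_cone_def zero_prod_def)
qed

lemma cone_coords_image_SH: "cone_coords ` SH = punctured_null_cone"
proof
  show "cone_coords ` SH \<subseteq> punctured_null_cone"
    using SH_iff_cone_coords by blast
  show "punctured_null_cone \<subseteq> cone_coords ` SH"
    by (metis SH_iff_cone_coords cone_coords_cone_coords_inv image_eqI subsetI)
qed

theorem lemma3p9:
  shows "diffeomorphic SH
           ((sphere (0::real^4) 1 \<times> sphere (0::real^4) 1) \<times> (UNIV :: real set))"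
proof -
  have "diffeomorphic SH (cone_coords ` SH)"
    using linear_cone_coords linear_cone_coords_inv cone_coords_inv_cone_coords
    by (rule diffeomorphic_linear_image)
  then show ?thesis
    unfolding cone_coords_image_SH using diffeomorphic_punctured_null_cone
    by (rule diffeomorphic_trans)
qed

end
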